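(* In the quasitriangular Hopf algebra $U_q(H_1,H_2,X^\pm)$ with universal $R$-matrix $\mathcal R=\sum_i a_i\otimes b_i$ as in the context, let $u=\sum_i S(b_i)a_i$, $z=u\,S(u)$ and $r=u\,(S(u))^{-1}$. Then, with $E=K_2X^+$, $F=K_2^{-1}X^-$, $$u=e^{i\frac{\pi}{4}H_2^2}q^{-\frac14(H_1^2-H_2^2)}\left(1+(1-q^2)K_1^{-1}K_2^{-1}FE\right),\qquad S(u)=e^{i\frac{\pi}{4}H_2^2}q^{-\frac14(H_1^2-H_2^2)}\left(1+(1-q^2)EFK_1K_2\right),$$ $$z=e^{i\frac{\pi}{2}H_2^2}q^{-\frac12(H_1^2-H_2^2)}\left(1+(1-q^2)(K_1K_2EF+K_1^{-1}K_2^{-1}FE)\right),\qquad r=e^{-i\pi H_2}q^{-(H_1+H_2)}.$$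
   Context: $q$ is a deformation parameter and exponentials of the generators are understood formally. Set $K_1=q^{H_1/2}$, $K_2=e^{i\frac{\pi}{2}H_2}q^{H_2/2}$. $U_q(H_1,H_2,X^\pm)$ is the Hopf algebra generated by $H_1,H_2,X^\pm$ with relations $[H_1,H_2]=0$, $[H_1,X^\pm]=\pm2X^\pm$, $[H_2,X^\pm]=\mp2X^\pm$, $[X^+,X^-]=\frac{K_1K_2-K_1^{-1}K_2^{-1}}{q-q^{-1}}$, $(X^\pm)^2=0$; coproduct $\Delta H_i=H_i\otimes1+1\otimes H_i$, $\Delta X^+=X^+\otimes K_1+K_2^{-1}\otimes X^+$, $\Delta X^-=X^-\otimes K_2+K_1^{-1}\otimes X^-$; counit $\varepsilon(H_i)=\varepsilon(X^\pm)=0$; antipode $S(H_i)=-H_i$, $S(X^+)=-qK_1^{-1}K_2X^+$, $S(X^-)=qK_1K_2^{-1}X^-$. Its universal $R$-matrix is $\mathcal{R}=e^{-i\frac{\pi}{4}H_2\otimes H_2}q^{\frac14(H_1\otimes H_1-H_2\otimes H_2)}(1\otimes1+(1-q^2)E\otimes F)$ with $E=K_2X^+$, $F=K_2^{-1}X^-$. *)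

theory Defs
  imports Complex_Main
begin

text \<open>Formal exponentials of H1, H2 such as
  q^(H/2) = exp(hb*H/2) are realised as functions of the weight (h1,h2).  Every element of the
  (completed) algebra is written uniquely in PBW normal form
    sum over (a,b) of  c_(a,b)(H1,H2) (X+)^a (X-)^b,    a,b in {0,1},
  with coefficient functions on the left; it is represented by the map (a,b) |-> c_(a,b).\<close>

type_synonym wt = "complex \<times> complex"
type_synonym uq = "bool \<times> bool \<Rightarrow> wt \<Rightarrow> complex"
type_synonym uqt = "bool \<times> bool \<Rightarrow> bool \<times> bool \<Rightarrow> wt \<Rightarrow> wt \<Rightarrow> complex"

definition qpar :: "complex \<Rightarrow> complex" where
  "qpar hb = exp hb"

definition K1f :: "complex \<Rightarrow> wt \<Rightarrow> complex" where
  "K1f hb h = exp (hb * fst h / 2)"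
definition K2f :: "complex \<Rightarrow> wt \<Rightarrow> complex" where
  "K2f hb h = exp (\<i> * pi * snd h / 2) * exp (hb * snd h / 2)"

text \<open>Value of [X+,X-] = (K1K2 - K1^-1 K2^-1)/(q - q^-1) at a weight.\<close>
definition Cf :: "complex \<Rightarrow> wt \<Rightarrow> complex" where
  "Cf hb h = (K1f hb h * K2f hb h - inverse (K1f hb h * K2f hb h)) / (qpar hb - inverse (qpar hb))"

text \<open>Commuting the monomial (X+)^a (X-)^b past a function g(H1,H2):
  (X+)^a (X-)^b g(H1,H2) = g(H1 - 2(a-b), H2 + 2(a-b)) (X+)^a (X-)^b
  (from [H1,X+-] = +-2X+-, [H2,X+-] = -+2X+-).\<close>
definition sh :: "bool \<times> bool \<Rightarrow> wt \<Rightarrow> wt" where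
  "sh \<alpha> h = (fst h - 2 * (of_bool (fst \<alpha>) - of_bool (snd \<alpha>)),
              snd h + 2 * (of_bool (fst \<alpha>) - of_bool (snd \<alpha>)))"

definition negw :: "wt \<Rightarrow> wt" where
  "negw h = (- fst h, - snd h)"

text \<open>Normal form of the product of monomials (X+)^a(X-)^b * (X+)^c(X-)^d, using
  (X+)^2 = (X-)^2 = 0 and X- X+ = X+ X- - [X+,X-]: coefficient of (X+)^g1 (X-)^g2 at weight h.\<close>
definition mm :: "complex \<Rightarrow> bool \<times> bool \<Rightarrow> bool \<times> bool \<Rightarrow> bool \<times> bool \<Rightarrow> wt \<Rightarrow> complex" where
  "mm hb \<alpha> \<beta> \<gamma> h =
     (let a = fst \<alpha>; b = snd \<alpha>; c = fst \<beta>; d = snd \<beta> in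
      if b \<and> c then
        (if \<not> a \<and> \<not> d \<and> \<gamma> = (True, True) then 1 else 0)
        - (if \<gamma> = (a, d) then Cf hb (sh (a, False) h) else 0)
      else if \<not> b then (if \<not> (a \<and> c) \<and> \<gamma> = (a \<or> c, d) then 1 else 0)
      else (if \<not> d \<and> \<gamma> = (a, True) then 1 else 0))"

definition Uq_mult :: "complex \<Rightarrow> uq \<Rightarrow> uq \<Rightarrow> uq" where
  "Uq_mult hb x y = (\<lambda>\<gamma> h. \<Sum>\<alpha>\<in>UNIV. \<Sum>\<beta>\<in>UNIV. x \<alpha> h * y \<beta> (sh \<alpha> h) * mm hb \<alpha> \<beta> \<gamma> h)"

definition Uq_add :: "uq \<Rightarrow> uq \<Rightarrow> uq" where
  "Uq_add x y = (\<lambda>\<gamma> h. x \<gamma> h + y \<gamma> h)"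

definition Uq_smult :: "complex \<Rightarrow> uq \<Rightarrow> uq" where
  "Uq_smult c x = (\<lambda>\<gamma> h. c * x \<gamma> h)"

definition Uq_sum :: "('i::finite \<Rightarrow> uq) \<Rightarrow> uq" where
  "Uq_sum f = (\<lambda>\<gamma> h. \<Sum>i\<in>UNIV. f i \<gamma> h)"

definition Uq_fun :: "(wt \<Rightarrow> complex) \<Rightarrow> uq" where
  "Uq_fun f = (\<lambda>\<gamma> h. if \<gamma> = (False, False) then f h else 0)"

definition Uq_mono :: "bool \<times> bool \<Rightarrow> uq" where
  "Uq_mono \<alpha> = (\<lambda>\<gamma> h. if \<gamma> = \<alpha> then 1 else 0)"

definition Uq_one :: uq where "Uq_one = Uq_mono (False, False)"
definition Uq_Xp :: uq where "Uq_Xp = Uq_mono (True, False)"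
definition Uq_Xm :: uq where "Uq_Xm = Uq_mono (False, True)"
definition Uq_H1 :: uq where "Uq_H1 = Uq_fun fst"
definition Uq_H2 :: uq where "Uq_H2 = Uq_fun snd"

definition Uq_K1 :: "complex \<Rightarrow> uq" where "Uq_K1 hb = Uq_fun (K1f hb)"
definition Uq_K2 :: "complex \<Rightarrow> uq" where "Uq_K2 hb = Uq_fun (K2f hb)"
definition Uq_K1inv :: "complex \<Rightarrow> uq" where "Uq_K1inv hb = Uq_fun (\<lambda>h. inverse (K1f hb h))"
definition Uq_K2inv :: "complex \<Rightarrow> uq" where "Uq_K2inv hb = Uq_fun (\<lambda>h. inverse (K2f hb h))"

definition Uq_E :: "complex \<Rightarrow> uq" where "Uq_E hb = Uq_mult hb (Uq_K2 hb) Uq_Xp"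
definition Uq_F :: "complex \<Rightarrow> uq" where "Uq_F hb = Uq_mult hb (Uq_K2inv hb) Uq_Xm"

definition Uq_inv :: "complex \<Rightarrow> uq \<Rightarrow> uq" where
  "Uq_inv hb x = (THE y. Uq_mult hb x y = Uq_one \<and> Uq_mult hb y x = Uq_one)"

text \<open>S(X+) = -q K1^-1 K2 X+,  S(X-) = q K1 K2^-1 X-,  S(H_i) = -H_i; S is an
  anti-homomorphism, so S(f(H) (X+)^a (X-)^b) = S(X-)^b S(X+)^a f(-H).\<close>
definition Uq_SXp :: "complex \<Rightarrow> uq" where
  "Uq_SXp hb = Uq_smult (- qpar hb) (Uq_mult hb (Uq_mult hb (Uq_K1inv hb) (Uq_K2 hb)) Uq_Xp)"
definition Uq_SXm :: "complex \<Rightarrow> uq" where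
  "Uq_SXm hb = Uq_smult (qpar hb) (Uq_mult hb (Uq_mult hb (Uq_K1 hb) (Uq_K2inv hb)) Uq_Xm)"

definition Uq_Smono :: "complex \<Rightarrow> bool \<times> bool \<Rightarrow> uq" where
  "Uq_Smono hb \<alpha> = Uq_mult hb (if snd \<alpha> then Uq_SXm hb else Uq_one)
                                (if fst \<alpha> then Uq_SXp hb else Uq_one)"

definition Uq_S :: "complex \<Rightarrow> uq \<Rightarrow> uq" where
  "Uq_S hb x = Uq_sum (\<lambda>\<alpha>. Uq_mult hb (Uq_Smono hb \<alpha>) (Uq_fun (\<lambda>h. x \<alpha> (negw h))))"

text \<open>An element sum F_(alpha,beta)(H (x) 1, 1 (x) H) (m_alpha (x) m_beta), coefficient functions of
  the weights of both factors on the left.\<close>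

definition Uqt_mult :: "complex \<Rightarrow> uqt \<Rightarrow> uqt \<Rightarrow> uqt" where
  "Uqt_mult hb X Y = (\<lambda>\<gamma> \<delta> h k. \<Sum>\<alpha>\<in>UNIV. \<Sum>\<beta>\<in>UNIV. \<Sum>\<alpha>'\<in>UNIV. \<Sum>\<beta>'\<in>UNIV.
      X \<alpha> \<beta> h k * Y \<alpha>' \<beta>' (sh \<alpha> h) (sh \<beta> k) * mm hb \<alpha> \<alpha>' \<gamma> h * mm hb \<beta> \<beta>' \<delta> k)"

definition Uqt_add :: "uqt \<Rightarrow> uqt \<Rightarrow> uqt" where
  "Uqt_add X Y = (\<lambda>\<alpha> \<beta> h k. X \<alpha> \<beta> h k + Y \<alpha> \<beta> h k)"

definition Uqt_smult :: "complex \<Rightarrow> uqt \<Rightarrow> uqt" where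
  "Uqt_smult c X = (\<lambda>\<alpha> \<beta> h k. c * X \<alpha> \<beta> h k)"

definition Uq_tensor :: "uq \<Rightarrow> uq \<Rightarrow> uqt" where
  "Uq_tensor x y = (\<lambda>\<alpha> \<beta> h k. x \<alpha> h * y \<beta> k)"

definition Uqt_one :: uqt where "Uqt_one = Uq_tensor Uq_one Uq_one"

definition Uqt_fun :: "(wt \<Rightarrow> wt \<Rightarrow> complex) \<Rightarrow> uqt" where
  "Uqt_fun \<Phi> = (\<lambda>\<alpha> \<beta> h k. if \<alpha> = (False, False) \<and> \<beta> = (False, False) then \<Phi> h k else 0)"

definition Uq_R :: "complex \<Rightarrow> uqt" where
  "Uq_R hb = Uqt_mult hb
      (Uqt_fun (\<lambda>h k. exp (- \<i> * pi / 4 * (snd h * snd k))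
                      * exp (hb / 4 * (fst h * fst k - snd h * snd k))))
      (Uqt_add Uqt_one (Uqt_smult (1 - (qpar hb)^2) (Uq_tensor (Uq_E hb) (Uq_F hb))))"

text \<open>For R = sum_i a_i (x) b_i, the element sum_i S(b_i) a_i.  On a term
  F(H(x)1, 1(x)H) (m_alpha (x) m_beta) = sum_i f_i(H) m_alpha (x) g_i(H) m_beta it equals
  sum_i S(m_beta) g_i(-H) f_i(H) m_alpha = S(m_beta) F(H,-H) m_alpha; extended linearly.\<close>
definition Uq_Sb_a :: "complex \<Rightarrow> uqt \<Rightarrow> uq" where
  "Uq_Sb_a hb T = Uq_sum (\<lambda>(\<alpha>, \<beta>). Uq_mult hb (Uq_S hb (Uq_mono \<beta>))
                       (Uq_mult hb (Uq_fun (\<lambda>h. T \<alpha> \<beta> h (negw h))) (Uq_mono \<alpha>)))"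

definition Uq_u :: "complex \<Rightarrow> uq" where
  "Uq_u hb = Uq_Sb_a hb (Uq_R hb)"

end

theory Submission
  imports Defs
begin

text \<open>Everything in the theorem has weight zero, i.e. is of the form f0(H) + f1(H) X+ X-. These
  elements form a commutative subalgebra with product (a0, a1)(b0, b1) = (a0 b0, a0 b1 + a1 b0 + C a1 b1),
  C = [X+, X-]; it is stable under the antipode, and (a0, a1) is invertible as soon as a0 and a0 + C a1
  vanish nowhere. Evaluated on the weights (h, -h), only the terms 1 (x) 1 and E (x) F of R survive, so
  u = sum S(b_i) a_i is such a pair, and S(u), z and r follow from the product and inverse formulas. The
  Cartan factors only require how K1, K2 and the Gaussian of u change under the weight shifts
  h |-> h +- (2, -2) caused by X+ and X-. For r one uses (1 - q^2) C = -q (K - K^-1), K = K1 K2,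
  valid when q^2 is not 1.\<close>

lemma UNIV_bool_pair:
  "(UNIV :: (bool \<times> bool) set) = {(False,False), (False,True), (True,False), (True,True)}"
  by (auto simp: UNIV_Times_UNIV[symmetric] UNIV_bool)

lemma sum_UNIV_bool_pair:
  "(\<Sum>\<alpha>\<in>UNIV. f \<alpha>) = f (False,False) + f (False,True) + f (True,False) + f (True,True)"
  by (simp add: UNIV_bool_pair add.assoc)

lemma sh_simps [simp]:
  "sh (False,False) h = h" "sh (True,True) h = h"
  "sh (True,False) h = (fst h - 2, snd h + 2)"
  "sh (False,True) h = (fst h + 2, snd h - 2)"
  by (simp_all add: sh_def)

lemma Uq_mult_apply: "Uq_mult hb x y = (\<lambda>\<gamma> h.
   if \<gamma> = (False,False) then x (False,False) h * y (False,False) h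
        - Cf hb h * x (False,True) h * y (True,False) (fst h + 2, snd h - 2)
   else if \<gamma> = (True,False) then x (False,False) h * y (True,False) h
        + x (True,False) h * y (False,False) (fst h - 2, snd h + 2)
        - Cf hb (fst h - 2, snd h + 2) * x (True,True) h * y (True,False) h
   else if \<gamma> = (False,True) then x (False,False) h * y (False,True) h
        + x (False,True) h * y (False,False) (fst h + 2, snd h - 2)
        - Cf hb h * x (False,True) h * y (True,True) (fst h + 2, snd h - 2)
   else x (False,False) h * y (True,True) h
        + x (True,False) h * y (False,True) (fst h - 2, snd h + 2)
        + x (False,True) h * y (True,False) (fst h + 2, snd h - 2)
        + x (True,True) h * y (False,False) h
        - Cf hb (fst h - 2, snd h + 2) * x (True,True) h * y (True,True) h)"
  unfolding Uq_mult_def by (intro ext) (auto simp: sum_UNIV_bool_pair mm_def algebra_simps)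

lemma qpar_nonzero [simp]: "qpar hb \<noteq> 0"
  and K1f_nonzero [simp]: "K1f hb h \<noteq> 0"
  and K2f_nonzero [simp]: "K2f hb h \<noteq> 0"
  by (simp_all add: qpar_def K1f_def K2f_def)

(* Suffix Xp / Xm: the weight shift sh produced when a function of H passes X+ / X-. *)
lemma K1f_shift_Xm: "K1f hb (a + 2, b - 2) = K1f hb (a, b) * qpar hb"
  unfolding K1f_def qpar_def by (simp add: exp_add[symmetric] algebra_simps add_divide_distrib)

lemma K1f_shift_Xp: "K1f hb (a - 2, b + 2) = K1f hb (a, b) / qpar hb"
  unfolding K1f_def qpar_def by (simp add: exp_diff[symmetric] algebra_simps diff_divide_distrib)

lemma K2f_shift_Xm: "K2f hb (a + 2, b - 2) = - (K2f hb (a, b) / qpar hb)"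
  unfolding K2f_def qpar_def by (simp add: algebra_simps diff_divide_distrib exp_diff)

lemma K2f_shift_Xp: "K2f hb (a - 2, b + 2) = - (K2f hb (a, b) * qpar hb)"
  unfolding K2f_def qpar_def by (simp add: algebra_simps add_divide_distrib exp_add)

lemma K1f_negw: "K1f hb (negw h) = inverse (K1f hb h)"
  unfolding K1f_def negw_def by (simp add: exp_minus[symmetric])

lemma K2f_negw: "K2f hb (negw h) = inverse (K2f hb h)"
  unfolding K2f_def negw_def by (simp add: exp_minus[symmetric] mult_exp_exp)

lemma Cf_shift_Xp: "Cf hb (a - 2, b + 2) = - Cf hb (a, b)"
proof -
  have "K1f hb (a - 2, b + 2) * K2f hb (a - 2, b + 2) = - (K1f hb (a, b) * K2f hb (a, b))"
    unfolding K1f_shift_Xp K2f_shift_Xp by (simp add: field_simps)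
  then show ?thesis
    unfolding Cf_def by (simp add: minus_divide_left)
qed

lemma Cf_negw: "Cf hb (negw h) = - Cf hb h"
proof -
  have "K1f hb (negw h) * K2f hb (negw h) = inverse (K1f hb h * K2f hb h)"
    unfolding K1f_negw K2f_negw by simp
  then show ?thesis
    unfolding Cf_def by (simp add: minus_divide_left)
qed

lemma Cf_generic:
  assumes "(qpar hb)^2 \<noteq> 1"
  shows "Cf hb h = qpar hb * (K1f hb h * K2f hb h - inverse (K1f hb h * K2f hb h)) / ((qpar hb)^2 - 1)"
proof -
  have "qpar hb - inverse (qpar hb) = ((qpar hb)^2 - 1) / qpar hb"
    by (simp add: field_simps power2_eq_square)
  then show ?thesis
    unfolding Cf_def by simp
qed

definition u_cartan :: "complex \<Rightarrow> wt \<Rightarrow> complex" where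
  "u_cartan hb h = exp (\<i> * pi / 4 * (snd h)^2) * exp (- hb / 4 * ((fst h)^2 - (snd h)^2))"

definition R_cartan :: "complex \<Rightarrow> wt \<Rightarrow> wt \<Rightarrow> complex" where
  "R_cartan hb h k = exp (- \<i> * pi / 4 * (snd h * snd k)) * exp (hb / 4 * (fst h * fst k - snd h * snd k))"

lemma u_cartan_nonzero [simp]: "u_cartan hb h \<noteq> 0"
  by (simp add: u_cartan_def)

lemma R_cartan_negw: "R_cartan hb h (negw h) = u_cartan hb h"
  unfolding R_cartan_def u_cartan_def negw_def by (simp add: power2_eq_square algebra_simps)

lemma u_cartan_negw: "u_cartan hb (negw h) = u_cartan hb h"
  unfolding u_cartan_def negw_def by simp

lemma u_cartan_shift_Xm:
  "u_cartan hb (a + 2, b - 2) = - u_cartan hb (a, b) / (K1f hb (a, b) * K2f hb (a, b))^2"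
proof -
  have "u_cartan hb (a + 2, b - 2) * (K1f hb (a, b) * K2f hb (a, b))^2 = exp (\<i> * pi) * u_cartan hb (a, b)"
    unfolding u_cartan_def K1f_def K2f_def power2_eq_square
    by (simp only: mult_exp_exp mult.assoc[symmetric])
      (rule arg_cong[where f = exp], simp add: field_simps power2_eq_square)
  then show ?thesis
    by (simp add: field_simps)
qed

lemma u_cartan_square:
  "u_cartan hb h ^ 2 = exp (\<i> * pi / 2 * (snd h)^2) * exp (- hb / 2 * ((fst h)^2 - (snd h)^2))"
  unfolding u_cartan_def power2_eq_square[of "_ * _"]
  by (simp only: mult_exp_exp mult.assoc[symmetric]) (rule arg_cong[where f = exp], simp add: field_simps)

lemma inverse_K1f_K2f_square:
  "inverse ((K1f hb h * K2f hb h)^2) = exp (- \<i> * pi * snd h) * exp (- hb * (fst h + snd h))"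
  unfolding K1f_def K2f_def power2_eq_square
  by (simp only: mult_exp_exp flip: exp_minus) (rule arg_cong[where f = exp], simp add: algebra_simps)

lemma Uq_mult_fun_left: "Uq_mult hb (Uq_fun f) x = (\<lambda>\<gamma> h. f h * x \<gamma> h)"
  by (auto simp: fun_eq_iff all_bool_eq Uq_mult_apply Uq_fun_def)

lemma Uq_mult_fun_right: "Uq_mult hb x (Uq_fun f) = (\<lambda>\<gamma> h. x \<gamma> h * f (sh \<gamma> h))"
  by (auto simp: fun_eq_iff all_bool_eq Uq_mult_apply Uq_fun_def)

lemma Uq_mult_fun_fun: "Uq_mult hb (Uq_fun f) (Uq_fun g) = Uq_fun (\<lambda>h. f h * g h)"
  unfolding Uq_mult_fun_left by (intro ext) (simp add: Uq_fun_def)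

lemma Uq_mult_one_left: "Uq_mult hb Uq_one x = x"
  by (auto simp: fun_eq_iff all_bool_eq Uq_mult_apply Uq_one_def Uq_mono_def)

lemma Uq_mult_one_right: "Uq_mult hb x Uq_one = x"
  by (auto simp: fun_eq_iff all_bool_eq Uq_mult_apply Uq_one_def Uq_mono_def)

lemma Uq_E_apply: "Uq_E hb = (\<lambda>\<gamma> h. if \<gamma> = (True,False) then K2f hb h else 0)"
  by (intro ext) (auto simp: Uq_E_def Uq_mult_apply Uq_K2_def Uq_fun_def Uq_Xp_def Uq_mono_def)

lemma Uq_F_apply: "Uq_F hb = (\<lambda>\<gamma> h. if \<gamma> = (False,True) then inverse (K2f hb h) else 0)"
  by (intro ext) (auto simp: Uq_F_def Uq_mult_apply Uq_K2inv_def Uq_fun_def Uq_Xm_def Uq_mono_def)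

lemma Uq_SXp_apply:
  "Uq_SXp hb = (\<lambda>\<gamma> h. if \<gamma> = (True,False) then - qpar hb * K2f hb h / K1f hb h else 0)"
  unfolding Uq_SXp_def Uq_K1inv_def Uq_K2_def Uq_mult_fun_fun
  unfolding Uq_mult_fun_left
  by (intro ext) (auto simp: Uq_fun_def Uq_Xp_def Uq_mono_def Uq_smult_def field_simps)

lemma Uq_SXm_apply:
  "Uq_SXm hb = (\<lambda>\<gamma> h. if \<gamma> = (False,True) then qpar hb * K1f hb h / K2f hb h else 0)"
  unfolding Uq_SXm_def Uq_K1_def Uq_K2inv_def Uq_mult_fun_fun
  unfolding Uq_mult_fun_left
  by (intro ext) (auto simp: Uq_fun_def Uq_Xm_def Uq_mono_def Uq_smult_def field_simps)

definition Uq_diag :: "(wt \<Rightarrow> complex) \<Rightarrow> (wt \<Rightarrow> complex) \<Rightarrow> uq" where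
  "Uq_diag f0 f1 = (\<lambda>\<gamma> h. if \<gamma> = (False,False) then f0 h else if \<gamma> = (True,True) then f1 h else 0)"

lemma Uq_diag_apply [simp]:
  "Uq_diag f0 f1 (False,False) h = f0 h" "Uq_diag f0 f1 (True,True) h = f1 h"
  "Uq_diag f0 f1 (False,True) h = 0" "Uq_diag f0 f1 (True,False) h = 0"
  by (simp_all add: Uq_diag_def)

lemma Uq_diag_eq_iff: "Uq_diag a0 a1 = Uq_diag b0 b1 \<longleftrightarrow> a0 = b0 \<and> a1 = b1"
proof
  assume "Uq_diag a0 a1 = Uq_diag b0 b1"
  from fun_cong[OF this, of "(False,False)"] fun_cong[OF this, of "(True,True)"]
  show "a0 = b0 \<and> a1 = b1" by (simp add: Uq_diag_def)
qed simp

lemma Uq_fun_eq_diag: "Uq_fun f = Uq_diag f (\<lambda>h. 0)"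
  by (intro ext) (simp add: Uq_fun_def Uq_diag_def)

lemma Uq_one_eq_diag: "Uq_one = Uq_diag (\<lambda>h. 1) (\<lambda>h. 0)"
  by (intro ext) (simp add: Uq_one_def Uq_mono_def Uq_diag_def)

lemma Uq_add_diag:
  "Uq_add (Uq_diag a0 a1) (Uq_diag b0 b1) = Uq_diag (\<lambda>h. a0 h + b0 h) (\<lambda>h. a1 h + b1 h)"
  by (intro ext) (simp add: Uq_add_def Uq_diag_def)

lemma Uq_smult_diag: "Uq_smult c (Uq_diag a0 a1) = Uq_diag (\<lambda>h. c * a0 h) (\<lambda>h. c * a1 h)"
  by (intro ext) (simp add: Uq_smult_def Uq_diag_def)

lemma Uq_mult_diag:
  "Uq_mult hb (Uq_diag a0 a1) (Uq_diag b0 b1) =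
     Uq_diag (\<lambda>h. a0 h * b0 h) (\<lambda>h. a0 h * b1 h + a1 h * b0 h + Cf hb h * a1 h * b1 h)"
  by (auto simp: fun_eq_iff all_bool_eq Uq_mult_apply Uq_diag_def Cf_shift_Xp)

lemma Uq_SXm_SXp: "Uq_mult hb (Uq_SXm hb) (Uq_SXp hb) = Uq_diag (\<lambda>h. - Cf hb h) (\<lambda>h. 1)"
  by (auto simp: fun_eq_iff all_bool_eq Uq_mult_apply Uq_SXm_apply Uq_SXp_apply Uq_diag_def
      K1f_shift_Xm K2f_shift_Xm field_simps)

lemma Uq_S_diag:
  "Uq_S hb (Uq_diag a0 a1) = Uq_diag (\<lambda>h. a0 (negw h) - Cf hb h * a1 (negw h)) (\<lambda>h. a1 (negw h))"
  unfolding Uq_S_def Uq_sum_def sum_UNIV_bool_pair Uq_Smono_def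
  by (simp add: Uq_mult_one_left Uq_mult_one_right Uq_SXm_SXp Uq_mult_fun_right)
    (auto simp: fun_eq_iff all_bool_eq Uq_diag_def Uq_one_def Uq_mono_def)

lemma Uq_S_mono: "Uq_S hb (Uq_mono \<beta>) = Uq_Smono hb \<beta>"
  unfolding Uq_S_def Uq_sum_def Uq_mult_fun_right
  by (cases \<beta>) (auto simp: fun_eq_iff sum_UNIV_bool_pair Uq_mono_def)

lemma Uqt_mult_fun_left: "Uqt_mult hb (Uqt_fun \<Phi>) Y = (\<lambda>\<gamma> \<delta> h k. \<Phi> h k * Y \<gamma> \<delta> h k)"
  by (auto simp: fun_eq_iff all_bool_eq Uqt_mult_def Uqt_fun_def sum_UNIV_bool_pair mm_def)

lemma Uq_sum_pair:
  "Uq_sum (f :: (bool \<times> bool) \<times> (bool \<times> bool) \<Rightarrow> uq) =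
     (\<lambda>\<gamma> h. \<Sum>\<alpha>\<in>UNIV. \<Sum>\<beta>\<in>UNIV. f (\<alpha>, \<beta>) \<gamma> h)"
  unfolding Uq_sum_def UNIV_Times_UNIV[symmetric] by (simp add: sum.cartesian_product)

lemma Uq_R_apply:
  "Uq_R hb = (\<lambda>\<gamma> \<delta> h k. R_cartan hb h k *
     ((if \<gamma> = (False,False) \<and> \<delta> = (False,False) then 1 else 0)
      + (1 - (qpar hb)^2) * Uq_E hb \<gamma> h * Uq_F hb \<delta> k))"
  unfolding Uq_R_def R_cartan_def[abs_def] Uqt_mult_fun_left
  by (simp add: fun_eq_iff Uqt_add_def Uqt_one_def Uq_tensor_def Uqt_smult_def Uq_one_def Uq_mono_def)

lemma Uq_R_at_negw:
  "Uq_R hb \<alpha> \<beta> h (negw h) =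
     (if \<alpha> = (False,False) \<and> \<beta> = (False,False) then u_cartan hb h
      else if \<alpha> = (True,False) \<and> \<beta> = (False,True) then (1 - (qpar hb)^2) * u_cartan hb h * K2f hb h ^ 2
      else 0)"
  by (auto simp: Uq_R_apply Uq_E_apply Uq_F_apply R_cartan_negw K2f_negw power2_eq_square)

lemma Uq_u_diag:
  "Uq_u hb = Uq_diag
     (\<lambda>h. u_cartan hb h * (1 + (1 - (qpar hb)^2) * Cf hb h / (qpar hb * K1f hb h * K2f hb h)))
     (\<lambda>h. - (1 - (qpar hb)^2) * u_cartan hb h / (qpar hb * K1f hb h * K2f hb h))"
proof -
  \<comment> \<open>E (x) F contributes S(X-) c' X+ = c X- X+ = c (X+ X- - C), where c' is its coefficient in R.\<close>
  define c where "c h = qpar hb * K1f hb h / K2f hb h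
      * ((1 - (qpar hb)^2) * u_cartan hb (fst h + 2, snd h - 2) * K2f hb (fst h + 2, snd h - 2) ^ 2)" for h
  have u: "Uq_u hb = Uq_diag (\<lambda>h. u_cartan hb h - Cf hb h * c h) c"
    unfolding Uq_u_def Uq_Sb_a_def Uq_sum_pair sum_UNIV_bool_pair Uq_R_at_negw Uq_mult_fun_left Uq_S_mono
    by (simp add: Uq_Smono_def Uq_mult_one_left)
      (auto simp: fun_eq_iff all_bool_eq Uq_mult_apply Uq_SXm_apply Uq_diag_def Uq_one_def Uq_mono_def c_def)
  have c: "c = (\<lambda>h. - (1 - (qpar hb)^2) * u_cartan hb h / (qpar hb * K1f hb h * K2f hb h))"
    by (simp add: fun_eq_iff c_def u_cartan_shift_Xm K2f_shift_Xm field_simps power2_eq_square)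
  show ?thesis
    unfolding u c Uq_diag_eq_iff by (simp add: fun_eq_iff field_simps)
qed

lemma Uq_K1inv_K2inv_F_E:
  "Uq_mult hb (Uq_mult hb (Uq_mult hb (Uq_K1inv hb) (Uq_K2inv hb)) (Uq_F hb)) (Uq_E hb) =
     Uq_diag (\<lambda>h. Cf hb h / (qpar hb * K1f hb h * K2f hb h)) (\<lambda>h. - 1 / (qpar hb * K1f hb h * K2f hb h))"
  unfolding Uq_K1inv_def Uq_K2inv_def Uq_mult_fun_fun
  unfolding Uq_mult_fun_left Uq_F_apply Uq_E_apply
  by (auto simp: fun_eq_iff all_bool_eq Uq_mult_apply Uq_diag_def K2f_shift_Xm field_simps)

lemma Uq_E_F_K1_K2:
  "Uq_mult hb (Uq_mult hb (Uq_mult hb (Uq_E hb) (Uq_F hb)) (Uq_K1 hb)) (Uq_K2 hb) =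
     Uq_diag (\<lambda>h. 0) (\<lambda>h. - K1f hb h * K2f hb h / qpar hb)"
  unfolding Uq_K1_def Uq_K2_def Uq_mult_fun_right Uq_F_apply Uq_E_apply
  by (auto simp: fun_eq_iff all_bool_eq Uq_mult_apply Uq_diag_def K2f_shift_Xp field_simps)

lemma Uq_K1_K2_E_F:
  "Uq_mult hb (Uq_mult hb (Uq_mult hb (Uq_K1 hb) (Uq_K2 hb)) (Uq_E hb)) (Uq_F hb) =
     Uq_diag (\<lambda>h. 0) (\<lambda>h. - K1f hb h * K2f hb h / qpar hb)"
  unfolding Uq_K1_def Uq_K2_def Uq_mult_fun_fun
  unfolding Uq_mult_fun_left Uq_F_apply Uq_E_apply
  by (auto simp: fun_eq_iff all_bool_eq Uq_mult_apply Uq_diag_def K2f_shift_Xp field_simps)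

lemma Uq_diag_right_inverse_unique:
  assumes a0: "\<And>h. a0 h \<noteq> 0" and a: "\<And>h. a0 h + Cf hb h * a1 h \<noteq> 0"
    and y: "Uq_mult hb (Uq_diag a0 a1) y = Uq_one"
  shows "y = Uq_diag (\<lambda>h. 1 / a0 h) (\<lambda>h. - a1 h / (a0 h * (a0 h + Cf hb h * a1 h)))"
proof -
  have y_eq: "Uq_mult hb (Uq_diag a0 a1) y \<gamma> h = Uq_one \<gamma> h" for \<gamma> h
    using y by simp
  have y00: "y (False,False) h = 1 / a0 h" for h
    using y_eq[of "(False,False)" h] a0[of h]
    by (simp add: Uq_mult_apply Uq_one_def Uq_mono_def field_simps)
  have y01: "y (False,True) h = 0" for h
    using y_eq[of "(False,True)" h] a0[of h]
    by (simp add: Uq_mult_apply Uq_one_def Uq_mono_def)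
  have "(a0 h + Cf hb h * a1 h) * y (True,False) h = 0" for h
    using y_eq[of "(True,False)" h]
    by (simp add: Uq_mult_apply Uq_one_def Uq_mono_def Cf_shift_Xp algebra_simps)
  then have y10: "y (True,False) h = 0" for h
    using a by (metis mult_eq_0_iff)
  have y11: "y (True,True) h = - a1 h / (a0 h * (a0 h + Cf hb h * a1 h))" for h
  proof -
    have "a1 h / a0 h + (a0 h + Cf hb h * a1 h) * y (True,True) h = 0"
      using y_eq[of "(True,True)" h]
      by (simp add: Uq_mult_apply Uq_one_def Uq_mono_def Cf_shift_Xp y00 algebra_simps)
    then have "(a0 h + Cf hb h * a1 h) * y (True,True) h = - (a1 h / a0 h)"
      by (simp add: eq_neg_iff_add_eq_0 add.commute)
    then have "y (True,True) h = - (a1 h / a0 h) / (a0 h + Cf hb h * a1 h)"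
      using a[of h] by (metis nonzero_mult_div_cancel_left)
    then show ?thesis
      by simp
  qed
  show ?thesis
    by (auto simp: fun_eq_iff all_bool_eq Uq_diag_def y00 y01 y10 y11)
qed

lemma Uq_mult_diag_commute:
  "Uq_mult hb (Uq_diag a0 a1) (Uq_diag b0 b1) = Uq_mult hb (Uq_diag b0 b1) (Uq_diag a0 a1)"
  unfolding Uq_mult_diag Uq_diag_eq_iff by (simp add: fun_eq_iff algebra_simps)

lemma Uq_inv_diag:
  assumes a0: "\<And>h. a0 h \<noteq> 0" and a: "\<And>h. a0 h + Cf hb h * a1 h \<noteq> 0"
  shows "Uq_inv hb (Uq_diag a0 a1) =
      Uq_diag (\<lambda>h. 1 / a0 h) (\<lambda>h. - a1 h / (a0 h * (a0 h + Cf hb h * a1 h)))"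
    (is "_ = Uq_diag ?b0 ?b1")
  unfolding Uq_inv_def
proof (rule the_equality)
  have "a0 h * ?b1 h + a1 h * ?b0 h + Cf hb h * a1 h * ?b1 h = 0" for h
  proof -
    define b where "b = ?b1 h"
    have "a0 h * b + a1 h * ?b0 h + Cf hb h * a1 h * b = (a0 h + Cf hb h * a1 h) * b + a1 h / a0 h"
      by (simp add: algebra_simps)
    also have "(a0 h + Cf hb h * a1 h) * b = - a1 h / a0 h"
      using a[of h] by (simp add: b_def)
    finally show ?thesis
      unfolding b_def by simp
  qed
  then have "Uq_mult hb (Uq_diag a0 a1) (Uq_diag ?b0 ?b1) = Uq_one"
    using a0 unfolding Uq_mult_diag Uq_one_eq_diag Uq_diag_eq_iff by (simp add: fun_eq_iff)
  then show "Uq_mult hb (Uq_diag a0 a1) (Uq_diag ?b0 ?b1) = Uq_one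
      \<and> Uq_mult hb (Uq_diag ?b0 ?b1) (Uq_diag a0 a1) = Uq_one"
    by (simp add: Uq_mult_diag_commute)
qed (use Uq_diag_right_inverse_unique[OF a0 a] in blast)

lemma Uq_S_u_diag:
  "Uq_S hb (Uq_u hb) =
     Uq_diag (u_cartan hb) (\<lambda>h. - (1 - (qpar hb)^2) * u_cartan hb h * K1f hb h * K2f hb h / qpar hb)"
  unfolding Uq_u_diag Uq_S_diag Uq_diag_eq_iff
  by (simp add: fun_eq_iff u_cartan_negw K1f_negw K2f_negw Cf_negw field_simps)

lemma Uq_u_eq:
  "Uq_u hb = Uq_mult hb (Uq_fun (u_cartan hb))
     (Uq_add Uq_one (Uq_smult (1 - (qpar hb)^2)
        (Uq_mult hb (Uq_mult hb (Uq_mult hb (Uq_K1inv hb) (Uq_K2inv hb)) (Uq_F hb)) (Uq_E hb))))"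
  unfolding Uq_u_diag Uq_K1inv_K2inv_F_E Uq_fun_eq_diag Uq_one_eq_diag Uq_smult_diag Uq_add_diag Uq_mult_diag
    Uq_diag_eq_iff
  by (simp add: fun_eq_iff field_simps)

lemma Uq_S_u_eq:
  "Uq_S hb (Uq_u hb) = Uq_mult hb (Uq_fun (u_cartan hb))
     (Uq_add Uq_one (Uq_smult (1 - (qpar hb)^2)
        (Uq_mult hb (Uq_mult hb (Uq_mult hb (Uq_E hb) (Uq_F hb)) (Uq_K1 hb)) (Uq_K2 hb))))"
  unfolding Uq_S_u_diag Uq_E_F_K1_K2 Uq_fun_eq_diag Uq_one_eq_diag Uq_smult_diag Uq_add_diag Uq_mult_diag
    Uq_diag_eq_iff
  by (simp add: fun_eq_iff field_simps)

lemma Uq_u_mult_S_u: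
  "Uq_mult hb (Uq_u hb) (Uq_S hb (Uq_u hb)) = Uq_mult hb (Uq_fun (\<lambda>h. u_cartan hb h ^ 2))
     (Uq_add Uq_one (Uq_smult (1 - (qpar hb)^2)
        (Uq_add (Uq_mult hb (Uq_mult hb (Uq_mult hb (Uq_K1 hb) (Uq_K2 hb)) (Uq_E hb)) (Uq_F hb))
                (Uq_mult hb (Uq_mult hb (Uq_mult hb (Uq_K1inv hb) (Uq_K2inv hb)) (Uq_F hb)) (Uq_E hb)))))"
  unfolding Uq_S_u_diag
  unfolding Uq_u_diag Uq_K1_K2_E_F Uq_K1inv_K2inv_F_E Uq_fun_eq_diag Uq_one_eq_diag
    Uq_smult_diag Uq_add_diag Uq_mult_diag Uq_diag_eq_iff
  by (simp add: fun_eq_iff field_simps power2_eq_square)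

lemma Uq_u_mult_inv_S_u:
  assumes "(qpar hb)^2 \<noteq> 1"
  shows "Uq_mult hb (Uq_u hb) (Uq_inv hb (Uq_S hb (Uq_u hb))) =
    Uq_fun (\<lambda>h. inverse ((K1f hb h * K2f hb h)^2))"
proof -
  have q: "(qpar hb)^2 - 1 \<noteq> 0"
    using assms by simp
  have S_u0: "u_cartan hb h + Cf hb h * (- (1 - (qpar hb)^2) * u_cartan hb h * K1f hb h * K2f hb h / qpar hb)
      = u_cartan hb h * (K1f hb h * K2f hb h)^2" for h
    using q by (simp add: Cf_generic[OF assms] field_simps power2_eq_square)
  then have S_u0_nonzero:
    "u_cartan hb h + Cf hb h * (- (1 - (qpar hb)^2) * u_cartan hb h * K1f hb h * K2f hb h / qpar hb) \<noteq> 0" for h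
    by simp
  have inv_S_u: "Uq_inv hb (Uq_S hb (Uq_u hb)) =
      Uq_diag (\<lambda>h. 1 / u_cartan hb h) (\<lambda>h. (1 - (qpar hb)^2) / (qpar hb * u_cartan hb h * K1f hb h * K2f hb h))"
    unfolding Uq_S_u_diag Uq_inv_diag[OF u_cartan_nonzero S_u0_nonzero] S_u0 Uq_diag_eq_iff
    by (simp add: fun_eq_iff field_simps power2_eq_square)
  show ?thesis
    unfolding inv_S_u
    unfolding Uq_u_diag Uq_mult_diag Uq_fun_eq_diag Uq_diag_eq_iff
    using q by (simp add: fun_eq_iff Cf_generic[OF assms] field_simps power2_eq_square)
qed

theorem mainTheorem2:
  fixes hb :: complex
  assumes q_generic: "(qpar hb)^2 \<noteq> 1"
  defines "u \<equiv> Uq_u hb"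
  defines "z \<equiv> Uq_mult hb u (Uq_S hb u)"
  defines "r \<equiv> Uq_mult hb u (Uq_inv hb (Uq_S hb u))"
  shows "(u = Uq_mult hb
             (Uq_fun (\<lambda>h. exp (\<i> * pi / 4 * (snd h)^2) * exp (- hb / 4 * ((fst h)^2 - (snd h)^2))))
             (Uq_add Uq_one (Uq_smult (1 - (qpar hb)^2)
                (Uq_mult hb (Uq_mult hb (Uq_mult hb (Uq_K1inv hb) (Uq_K2inv hb)) (Uq_F hb)) (Uq_E hb)))))
    \<and> (Uq_S hb u = Uq_mult hb
             (Uq_fun (\<lambda>h. exp (\<i> * pi / 4 * (snd h)^2) * exp (- hb / 4 * ((fst h)^2 - (snd h)^2))))
             (Uq_add Uq_one (Uq_smult (1 - (qpar hb)^2)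
                (Uq_mult hb (Uq_mult hb (Uq_mult hb (Uq_E hb) (Uq_F hb)) (Uq_K1 hb)) (Uq_K2 hb)))))
    \<and> (z = Uq_mult hb
             (Uq_fun (\<lambda>h. exp (\<i> * pi / 2 * (snd h)^2) * exp (- hb / 2 * ((fst h)^2 - (snd h)^2))))
             (Uq_add Uq_one (Uq_smult (1 - (qpar hb)^2)
                (Uq_add (Uq_mult hb (Uq_mult hb (Uq_mult hb (Uq_K1 hb) (Uq_K2 hb)) (Uq_E hb)) (Uq_F hb))
                        (Uq_mult hb (Uq_mult hb (Uq_mult hb (Uq_K1inv hb) (Uq_K2inv hb)) (Uq_F hb)) (Uq_E hb))))))
    \<and> (r = Uq_fun (\<lambda>h. exp (- \<i> * pi * snd h) * exp (- hb * (fst h + snd h))))"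
  unfolding u_def z_def r_def
  unfolding u_cartan_def[symmetric] u_cartan_square[symmetric] inverse_K1f_K2f_square[symmetric]
  using Uq_u_eq Uq_S_u_eq Uq_u_mult_S_u Uq_u_mult_inv_S_u[OF q_generic] by simp

end
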